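(* Let $c\le 7$ be a nonnegative integer and let $C\subset V(\tfrac12 H^{0}_{24})$ be such that $\chi_C$ is a perfect coloring of $\tfrac12 H^{0}_{24}$ with parameters $((20+c,\,256-c)(c,\,276-c))$. Then $C$ is a union of spheres.
   Context: $E^{24}$ is the set of binary words of length $24$ with Hamming distance. $\tfrac12 H^{0}_{24}$ is the graph on even-weight words of $E^{24}$, adjacent iff at Hamming distance exactly $2$ (degree $276$). A sphere is a set $S\subset V(\tfrac12 H^{0}_{24})$ consisting of all $24$ words at Hamming distance $1$ from some odd-weight word (its center). For a set $C$ with $\emptyset\ne C\subsetneq V$, $\chi_C$ is a perfect coloring with parameters $((a,b)(c,d))$ if every vertex of $C$ has exactly $a$ neighbours in $C$ and $b$ outside, and every vertex outside $C$ has exactly $c$ neighbours in $C$ and $d$ outside. *)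

theory Defs
  imports Main
begin

text \<open>Binary words of length 24 are represented by their supports: subsets of {0..<24}.
  Hamming distance is the cardinality of the symmetric difference.\<close>

definition words :: "nat set set" where
  "words = Pow {0..<24}"

definition hdist :: "nat set \<Rightarrow> nat set \<Rightarrow> nat" where
  "hdist x y = card ((x - y) \<union> (y - x))"

text \<open>Vertex set of the halved 24-cube: even-weight words.\<close>
definition V24 :: "nat set set" where
  "V24 = {x \<in> words. even (card x)}"

definition adj24 :: "nat set \<Rightarrow> nat set \<Rightarrow> bool" where
  "adj24 x y \<longleftrightarrow> hdist x y = 2"

definition sphere :: "nat set \<Rightarrow> nat set set" where
  "sphere z = {x \<in> words. hdist x z = 1}"

definition is_sphere :: "nat set set \<Rightarrow> bool" where
  "is_sphere S \<longleftrightarrow> (\<exists>z \<in> words. odd (card z) \<and> S = sphere z)"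

definition perfect_coloring24 :: "nat set set \<Rightarrow> nat \<Rightarrow> nat \<Rightarrow> nat \<Rightarrow> nat \<Rightarrow> bool" where
  "perfect_coloring24 C a b c d \<longleftrightarrow>
     C \<noteq> {} \<and> C \<subset> V24 \<and>
     (\<forall>v \<in> C. card {u \<in> C. adj24 v u} = a \<and> card {u \<in> V24 - C. adj24 v u} = b) \<and>
     (\<forall>v \<in> V24 - C. card {u \<in> C. adj24 v u} = c \<and> card {u \<in> V24 - C. adj24 v u} = d)"

end

theory Submission
  imports Defs
begin

(* For the coloring this gives: (1) if a link degree at a
   reaches c, then a is a centre of v and the sphere around v (+) {a} lies in C;
   (2) |far_triples v a| = 7c - 21.  If v had no centre, a case analysis on two link neighbours
   j, k of a (through the link of the neighbour v (+) {a,j}) bounds every link degree so much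
   that their sum falls below the value 40 + 2c forced by the handshake lemma.  Hence every
   vertex of C lies on a sphere contained in C. *)

section \<open>Symmetric difference\<close>

definition sdiff :: "'a set \<Rightarrow> 'a set \<Rightarrow> 'a set" (infixl "\<oplus>" 65) where
  "A \<oplus> B = sym_diff A B"

lemma sdiff_cancel_left: "(x \<oplus> A) \<oplus> (x \<oplus> B) = A \<oplus> B"
  unfolding sdiff_def by blast

lemma sdiff_sdiff_left: "x \<oplus> (x \<oplus> A) = A"
  unfolding sdiff_def by blast

lemma sdiff_assoc: "(A \<oplus> B) \<oplus> D = A \<oplus> (B \<oplus> D)"
  unfolding sdiff_def by blast

lemma sdiff_commute: "A \<oplus> B = B \<oplus> A"
  unfolding sdiff_def by blast

lemma sdiff_empty [simp]: "x \<oplus> {} = x" "{} \<oplus> x = x"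
  unfolding sdiff_def by blast+

lemma sdiff_subset: "x \<subseteq> I \<Longrightarrow> A \<subseteq> I \<Longrightarrow> x \<oplus> A \<subseteq> I"
  unfolding sdiff_def by blast

lemma inj_sdiff: "inj_on (\<lambda>r. x \<oplus> r) S"
  by (metis inj_onI sdiff_sdiff_left)

lemma hdist_sdiff: "hdist x y = card (x \<oplus> y)"
  unfolding hdist_def sdiff_def ..

lemma card_sdiff:
  assumes "finite A" "finite B"
  shows "card (A \<oplus> B) + 2 * card (A \<inter> B) = card A + card B"
proof -
  have eq: "A \<oplus> B = (A \<union> B) - (A \<inter> B)" unfolding sdiff_def by blast
  have "card (A \<oplus> B) = card (A \<union> B) - card (A \<inter> B)"
    unfolding eq using assms by (intro card_Diff_subset) auto
  moreover have "card (A \<inter> B) \<le> card (A \<union> B)" using assms by (intro card_mono) auto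
  ultimately show ?thesis using card_Un_Int[OF assms] by linarith
qed

lemma even_card_sdiff:
  assumes "finite A" "finite B"
  shows "even (card (A \<oplus> B)) \<longleftrightarrow> even (card A + card B)"
  using card_sdiff[OF assms] by presburger

section \<open>Local counting around a word\<close>

definition adj_count :: "nat set set \<Rightarrow> nat set \<Rightarrow> nat" where
  "adj_count C w = card {u \<in> C. adj24 w u}"

text \<open>The link graph of x in C over the ground set U has an edge {a,b} iff x \<oplus> {a,b} \<in> C;
  link_deg is its degree at a.  far_triples collects the 3-sets T avoiding a with
  x \<oplus> ({a} \<union> T) \<in> C, i.e. the members of C at distance 4 from x whose difference with x
  contains a, and far_deg counts those containing b.\<close>

definition link_deg :: "nat set \<Rightarrow> nat set set \<Rightarrow> nat set \<Rightarrow> nat \<Rightarrow> nat" where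
  "link_deg U C x a = card {b \<in> U - {a}. x \<oplus> {a,b} \<in> C}"

definition far_triples :: "nat set \<Rightarrow> nat set set \<Rightarrow> nat set \<Rightarrow> nat \<Rightarrow> nat set set" where
  "far_triples U C x a = {T. T \<subseteq> U - {a} \<and> card T = 3 \<and> x \<oplus> insert a T \<in> C}"

definition far_deg :: "nat set \<Rightarrow> nat set set \<Rightarrow> nat set \<Rightarrow> nat \<Rightarrow> nat \<Rightarrow> nat" where
  "far_deg U C x a b = card {T \<in> far_triples U C x a. b \<in> T}"

lemma finite_far_triples: "finite U \<Longrightarrow> finite (far_triples U C x a)"
  by (rule finite_subset[of _ "Pow U"]) (auto simp: far_triples_def)

lemma adj_count_translate:
  assumes CU: "C \<subseteq> Pow U" and xU: "x \<subseteq> U"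
  shows "adj_count C (x \<oplus> p) = card {r. r \<subseteq> U \<and> card (p \<oplus> r) = 2 \<and> x \<oplus> r \<in> C}"
proof -
  let ?G = "{r. r \<subseteq> U \<and> card (p \<oplus> r) = 2 \<and> x \<oplus> r \<in> C}"
  have "{u \<in> C. adj24 (x \<oplus> p) u} = (\<lambda>r. x \<oplus> r) ` ?G"
  proof (intro equalityI subsetI)
    fix u assume u: "u \<in> {u \<in> C. adj24 (x \<oplus> p) u}"
    have "(x \<oplus> p) \<oplus> u = p \<oplus> (x \<oplus> u)"
      using sdiff_cancel_left[of x p "x \<oplus> u"] by (simp add: sdiff_sdiff_left)
    moreover have "x \<oplus> u \<subseteq> U" using u CU xU by (intro sdiff_subset) auto
    ultimately have "x \<oplus> u \<in> ?G" using u by (simp add: adj24_def hdist_sdiff sdiff_sdiff_left)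
    then show "u \<in> (\<lambda>r. x \<oplus> r) ` ?G" by (rule image_eqI[rotated]) (simp add: sdiff_sdiff_left)
  next
    fix u assume "u \<in> (\<lambda>r. x \<oplus> r) ` ?G"
    then show "u \<in> {u \<in> C. adj24 (x \<oplus> p) u}"
      by (auto simp: adj24_def hdist_sdiff sdiff_cancel_left)
  qed
  then show ?thesis unfolding adj_count_def by (simp add: card_image inj_sdiff)
qed

lemma pair_offset_cases:
  assumes finU: "finite U" and rU: "r \<subseteq> U" and ab: "a \<noteq> b" and r2: "card ({a,b} \<oplus> r) = 2"
  obtains "r = {}"
    | y where "y \<in> U - {a,b}" "r = {a,y}"
    | y where "y \<in> U - {a,b}" "r = {b,y}"
    | T where "T \<subseteq> U - {a}" "card T = 3" "b \<in> T" "r = insert a T"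
proof -
  have fr: "finite r" using rU finU finite_subset by blast
  have "card ({a,b} \<oplus> r) + 2 * card ({a,b} \<inter> r) = 2 + card r"
    using card_sdiff[of "{a,b}" r] fr ab by simp
  then have cr: "card r = 2 * card ({a,b} \<inter> r)" using r2 by simp
  consider "a \<in> r" "b \<in> r" | "a \<in> r" "b \<notin> r" | "a \<notin> r" "b \<in> r" | "a \<notin> r" "b \<notin> r"
    by blast
  then show ?thesis
  proof cases
    case 1
    then have "{a,b} \<inter> r = {a,b}" by blast
    then have "card (r - {a}) = 3" using cr fr ab 1 by simp
    moreover have "r - {a} \<subseteq> U - {a}" "b \<in> r - {a}" "r = insert a (r - {a})" using 1 rU ab by auto
    ultimately show ?thesis using that(4) by blast
  next
    case 2
    then have "{a,b} \<inter> r = {a}" by blast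
    then have "card (r - {a}) = Suc 0" using cr fr 2 by simp
    then obtain y where y: "r - {a} = {y}" by (auto simp: card_1_singleton_iff)
    then have "y \<in> U - {a,b}" "r = {a,y}" using 2 rU by auto
    then show ?thesis by (rule that(2))
  next
    case 3
    then have "{a,b} \<inter> r = {b}" by blast
    then have "card (r - {b}) = Suc 0" using cr fr 3 by simp
    then obtain y where y: "r - {b} = {y}" by (auto simp: card_1_singleton_iff)
    then have "y \<in> U - {a,b}" "r = {b,y}" using 3 rU by auto
    then show ?thesis by (rule that(3))
  next
    case 4
    then have "{a,b} \<inter> r = {}" by blast
    then show ?thesis using that(1) cr fr by simp
  qed
qed

lemma link_deg_minus:
  assumes finU: "finite U" and bU: "b \<in> U" and ab: "a \<noteq> b"
  shows "link_deg U C x a = card {y \<in> U - {a,b}. x \<oplus> {a,y} \<in> C} + of_bool (x \<oplus> {a,b} \<in> C)"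
proof (cases "x \<oplus> {a,b} \<in> C")
  case True
  then have "{y \<in> U - {a}. x \<oplus> {a,y} \<in> C} = insert b {y \<in> U - {a,b}. x \<oplus> {a,y} \<in> C}"
    using bU ab by blast
  then show ?thesis using True finU unfolding link_deg_def by simp
next
  case False
  then have "{y \<in> U - {a}. x \<oplus> {a,y} \<in> C} = {y \<in> U - {a,b}. x \<oplus> {a,y} \<in> C}"
    by blast
  then show ?thesis using False unfolding link_deg_def by simp
qed

lemma link_deg_as_sum:
  assumes "finite U"
  shows "link_deg U C x a = (\<Sum>b\<in>U - {a}. of_bool (x \<oplus> {a,b} \<in> C))"
proof -
  have eq: "{b \<in> U - {a}. x \<oplus> {a,b} \<in> C} = (U - {a}) \<inter> {b. x \<oplus> {a,b} \<in> C}" by blast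
  have "(\<Sum>b\<in>U - {a}. of_bool (x \<oplus> {a,b} \<in> C)) = card ((U - {a}) \<inter> {b. x \<oplus> {a,b} \<in> C})"
    using assms by simp
  then show ?thesis unfolding link_deg_def eq by (rule sym)
qed

lemma pair_offsets:
  assumes finU: "finite U" and aU: "a \<in> U" and bU: "b \<in> U" and ab: "a \<noteq> b"
  shows "{r. r \<subseteq> U \<and> card ({a,b} \<oplus> r) = 2 \<and> x \<oplus> r \<in> C}
       = (if x \<in> C then {{}} else {})
         \<union> (\<lambda>y. {a,y}) ` {y \<in> U - {a,b}. x \<oplus> {a,y} \<in> C}
         \<union> (\<lambda>y. {b,y}) ` {y \<in> U - {a,b}. x \<oplus> {b,y} \<in> C}
         \<union> insert a ` {T \<in> far_triples U C x a. b \<in> T}" (is "?G = ?H")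
proof (intro equalityI subsetI)
  fix r assume "r \<in> ?G"
  then have r: "r \<subseteq> U" "card ({a,b} \<oplus> r) = 2" "x \<oplus> r \<in> C" by auto
  from pair_offset_cases[OF finU r(1) ab r(2)] show "r \<in> ?H"
    by cases (use r(3) in \<open>auto simp: far_triples_def\<close>)
next
  fix r assume "r \<in> ?H"
  then consider "x \<in> C" "r = {}"
    | y where "y \<in> U - {a,b}" "x \<oplus> {a,y} \<in> C" "r = {a,y}"
    | y where "y \<in> U - {a,b}" "x \<oplus> {b,y} \<in> C" "r = {b,y}"
    | S where "S \<in> far_triples U C x a" "b \<in> S" "r = insert a S"
    by (auto split: if_splits)
  then show "r \<in> ?G"
  proof cases
    case 1
    then show ?thesis using ab by simp
  next
    case (2 y)
    moreover have "{a,b} \<oplus> {a,y} = {b,y}" using 2 ab unfolding sdiff_def by auto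
    ultimately show ?thesis using aU ab by auto
  next
    case (3 y)
    moreover have "{a,b} \<oplus> {b,y} = {a,y}" using 3 ab unfolding sdiff_def by auto
    ultimately show ?thesis using bU by auto
  next
    case (4 S)
    then have S: "S \<subseteq> U - {a}" "card S = 3" "x \<oplus> insert a S \<in> C" by (auto simp: far_triples_def)
    moreover have "{a,b} \<oplus> insert a S = S - {b}" using S(1) 4 unfolding sdiff_def by auto
    moreover have "finite S" using S(1) finU finite_subset by blast
    ultimately show ?thesis using 4 aU by auto
  qed
qed

lemma adj_count_pair:
  assumes finU: "finite U" and CU: "C \<subseteq> Pow U" and xU: "x \<subseteq> U"
    and aU: "a \<in> U" and bU: "b \<in> U" and ab: "a \<noteq> b"
  shows "adj_count C (x \<oplus> {a,b}) + 2 * of_bool (x \<oplus> {a,b} \<in> C)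
       = of_bool (x \<in> C) + link_deg U C x a + link_deg U C x b + far_deg U C x a b"
proof -
  define Sa where "Sa = {y \<in> U - {a,b}. x \<oplus> {a,y} \<in> C}"
  define Sb where "Sb = {y \<in> U - {a,b}. x \<oplus> {b,y} \<in> C}"
  define T where "T = {T \<in> far_triples U C x a. b \<in> T}"
  define G0 :: "nat set set" where "G0 = (if x \<in> C then {{}} else {})"
  have "adj_count C (x \<oplus> {a,b}) = card (G0 \<union> (\<lambda>y. {a,y}) ` Sa \<union> (\<lambda>y. {b,y}) ` Sb \<union> insert a ` T)"
    using adj_count_translate[OF CU xU] pair_offsets[OF finU aU bU ab]
    unfolding G0_def Sa_def Sb_def T_def by simp
  also have "\<dots> = card G0 + card ((\<lambda>y. {a,y}) ` Sa) + card ((\<lambda>y. {b,y}) ` Sb) + card (insert a ` T)"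
  proof -
    have "\<forall>r\<in>G0. a \<notin> r \<and> b \<notin> r" "\<forall>r\<in>(\<lambda>y. {a,y}) ` Sa. a \<in> r \<and> b \<notin> r"
      "\<forall>r\<in>(\<lambda>y. {b,y}) ` Sb. a \<notin> r \<and> b \<in> r" "\<forall>r\<in>insert a ` T. a \<in> r \<and> b \<in> r"
      using ab by (auto simp: G0_def Sa_def Sb_def T_def)
    moreover have "finite G0" "finite Sa" "finite Sb" "finite T"
      using finU finite_far_triples[OF finU] by (auto simp: G0_def Sa_def Sb_def T_def)
    ultimately show ?thesis by (subst card_Un_disjoint, simp, simp, fastforce)+ simp
  qed
  also have "card (insert a ` T) = card T"
  proof (rule card_image, rule inj_onI)
    fix S S' assume S: "S \<in> T" "S' \<in> T" "insert a S = insert a S'"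
    moreover have "a \<notin> S" "a \<notin> S'" using S(1,2) by (auto simp: T_def far_triples_def)
    ultimately show "S = S'" by (metis Diff_insert_absorb)
  qed
  also have "card ((\<lambda>y. {a,y}) ` Sa) = card Sa"
    by (auto intro!: card_image simp: inj_on_def doubleton_eq_iff Sa_def)
  also have "card ((\<lambda>y. {b,y}) ` Sb) = card Sb"
    by (auto intro!: card_image simp: inj_on_def doubleton_eq_iff Sb_def)
  finally have "adj_count C (x \<oplus> {a,b}) = card G0 + card Sa + card Sb + card T" .
  moreover have "link_deg U C x a = card Sa + of_bool (x \<oplus> {a,b} \<in> C)"
    unfolding Sa_def using link_deg_minus[OF finU bU ab] .
  moreover have "link_deg U C x b = card Sb + of_bool (x \<oplus> {a,b} \<in> C)"
    unfolding Sb_def using link_deg_minus[OF finU aU ab[symmetric]] by (simp add: insert_commute)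
  moreover have "card G0 = of_bool (x \<in> C)" by (simp add: G0_def)
  ultimately show ?thesis by (simp add: far_deg_def T_def)
qed

definition link_edges :: "nat set \<Rightarrow> nat set set \<Rightarrow> nat set \<Rightarrow> nat set set" where
  "link_edges U C x = {r. r \<subseteq> U \<and> card r = 2 \<and> x \<oplus> r \<in> C}"

lemma adj_count_link_edges:
  "C \<subseteq> Pow U \<Longrightarrow> x \<subseteq> U \<Longrightarrow> adj_count C x = card (link_edges U C x)"
  using adj_count_translate[of C U x "{}"] by (simp add: link_edges_def)

lemma link_deg_edges:
  assumes finU: "finite U" and aU: "a \<in> U"
  shows "link_deg U C x a = card {r \<in> link_edges U C x. a \<in> r}"
proof -
  have eq: "{r \<in> link_edges U C x. a \<in> r} = (\<lambda>b. {a,b}) ` {b \<in> U - {a}. x \<oplus> {a,b} \<in> C}"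
  proof (intro equalityI subsetI)
    fix r assume "r \<in> {r \<in> link_edges U C x. a \<in> r}"
    then have r: "r \<subseteq> U" "card r = 2" "x \<oplus> r \<in> C" "a \<in> r" by (auto simp: link_edges_def)
    then have "card (r - {a}) = Suc 0" using finU by (simp add: finite_subset)
    then obtain b where b: "r - {a} = {b}" by (auto simp: card_1_singleton_iff)
    then have "r = {a,b}" "b \<in> U - {a}" using r by auto
    then show "r \<in> (\<lambda>b. {a,b}) ` {b \<in> U - {a}. x \<oplus> {a,b} \<in> C}" using r by blast
  next
    fix r assume "r \<in> (\<lambda>b. {a,b}) ` {b \<in> U - {a}. x \<oplus> {a,b} \<in> C}"
    then obtain b where "b \<in> U - {a}" "x \<oplus> {a,b} \<in> C" "r = {a,b}" by blast
    then show "r \<in> {r \<in> link_edges U C x. a \<in> r}" using aU by (simp add: link_edges_def)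
  qed
  have inj: "inj_on (\<lambda>b. {a,b}) {b \<in> U - {a}. x \<oplus> {a,b} \<in> C}"
    by (auto simp: inj_on_def doubleton_eq_iff)
  show ?thesis unfolding link_deg_def eq by (rule card_image[OF inj, symmetric])
qed

lemma handshake:
  assumes finU: "finite U" and CU: "C \<subseteq> Pow U" and xU: "x \<subseteq> U"
  shows "(\<Sum>a\<in>U. link_deg U C x a) = 2 * adj_count C x"
proof -
  have fin: "finite (link_edges U C x)"
    by (rule finite_subset[of _ "Pow U"]) (use finU in \<open>auto simp: link_edges_def\<close>)
  have "(\<Sum>a\<in>U. card {r \<in> link_edges U C x. a \<in> r}) = 2 * card (link_edges U C x)"
  proof (rule sum_multicount[OF finU fin])
    show "\<forall>r\<in>link_edges U C x. card {a \<in> U. a \<in> r} = 2"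
    proof
      fix r assume "r \<in> link_edges U C x"
      then have "{a \<in> U. a \<in> r} = r" "card r = 2" by (auto simp: link_edges_def)
      then show "card {a \<in> U. a \<in> r} = 2" by simp
    qed
  qed
  then show ?thesis using link_deg_edges[OF finU] adj_count_link_edges[OF CU xU] by simp
qed

text \<open>Every far triple is counted once for each of its three points.\<close>

lemma sum_far_deg:
  assumes "finite U"
  shows "(\<Sum>b\<in>U - {a}. far_deg U C x a b) = 3 * card (far_triples U C x a)"
  unfolding far_deg_def
proof (rule sum_multicount)
  show "\<forall>T\<in>far_triples U C x a. card {b \<in> U - {a}. b \<in> T} = 3"
  proof
    fix T assume "T \<in> far_triples U C x a"
    then have "T \<subseteq> U - {a}" "card T = 3" by (auto simp: far_triples_def)
    moreover from this(1) have "{b \<in> U - {a}. b \<in> T} = T" by blast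
    ultimately show "card {b \<in> U - {a}. b \<in> T} = 3" by simp
  qed
qed (use assms in \<open>simp_all add: finite_far_triples\<close>)

text \<open>The far triples of a through two further points j and k correspond to their third point.\<close>

lemma card_far_triples_through:
  assumes jU: "j \<in> U" and kU: "k \<in> U" and dist: "a \<noteq> j" "a \<noteq> k" "j \<noteq> k"
  shows "card {T \<in> far_triples U C x a. j \<in> T \<and> k \<in> T}
       = card {l \<in> U - {a,j,k}. x \<oplus> {a,j,k,l} \<in> C}"
proof -
  have eq: "{T \<in> far_triples U C x a. j \<in> T \<and> k \<in> T}
      = (\<lambda>l. {j,k,l}) ` {l \<in> U - {a,j,k}. x \<oplus> {a,j,k,l} \<in> C}"
  proof (intro equalityI subsetI)
    fix T assume T: "T \<in> {T \<in> far_triples U C x a. j \<in> T \<and> k \<in> T}"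
    then have "finite T" "card T = 3" "j \<in> T" "k \<in> T"
      by (auto simp: far_triples_def card_ge_0_finite)
    then have "card (T - {j,k}) = Suc 0" using dist by (simp add: card_Diff_subset)
    then obtain l where l: "T - {j,k} = {l}" by (auto simp: card_1_singleton_iff)
    then have "T = {j,k,l}" using \<open>j \<in> T\<close> \<open>k \<in> T\<close> by auto
    moreover have "l \<in> U - {a,j,k}" "x \<oplus> {a,j,k,l} \<in> C"
      using T l calculation by (auto simp: far_triples_def)
    ultimately show "T \<in> (\<lambda>l. {j,k,l}) ` {l \<in> U - {a,j,k}. x \<oplus> {a,j,k,l} \<in> C}" by blast
  next
    fix T assume "T \<in> (\<lambda>l. {j,k,l}) ` {l \<in> U - {a,j,k}. x \<oplus> {a,j,k,l} \<in> C}"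
    then show "T \<in> {T \<in> far_triples U C x a. j \<in> T \<and> k \<in> T}"
      using jU kU dist by (auto simp: far_triples_def)
  qed
  have inj: "inj_on (\<lambda>l. {j,k,l}) {l \<in> U - {a,j,k}. x \<oplus> {a,j,k,l} \<in> C}"
    by (auto simp: inj_on_def)
  show ?thesis unfolding eq by (rule card_image[OF inj])
qed

text \<open>Inclusion-exclusion for the far triples through j or through k.\<close>

lemma far_deg_two_le:
  assumes "finite U"
  shows "far_deg U C x a j + far_deg U C x a k
       \<le> card (far_triples U C x a) + card {T \<in> far_triples U C x a. j \<in> T \<and> k \<in> T}"
proof -
  let ?R = "far_triples U C x a"
  have fin: "finite ?R" using assms by (rule finite_far_triples)
  let ?A = "{T \<in> ?R. j \<in> T}" and ?B = "{T \<in> ?R. k \<in> T}"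
  have "card ?A + card ?B = card (?A \<union> ?B) + card (?A \<inter> ?B)"
    using fin by (intro card_Un_Int) auto
  moreover have "?A \<inter> ?B = {T \<in> ?R. j \<in> T \<and> k \<in> T}" by blast
  moreover have "card (?A \<union> ?B) \<le> card ?R" using fin by (intro card_mono) auto
  ultimately show ?thesis unfolding far_deg_def by simp
qed

text \<open>A third point l meets the far triples through j and k at most in {j,k,l}.\<close>

lemma far_deg_third_le:
  assumes "finite U" and "j \<noteq> k" "l \<noteq> j" "l \<noteq> k"
  shows "far_deg U C x a l + card {T \<in> far_triples U C x a. j \<in> T \<and> k \<in> T}
       \<le> card (far_triples U C x a) + 1"
proof -
  let ?R = "far_triples U C x a" and ?J = "{T \<in> far_triples U C x a. j \<in> T \<and> k \<in> T}"
  have fin: "finite ?R" using assms(1) by (rule finite_far_triples)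
  have "{T \<in> ?R. l \<in> T} \<subseteq> insert {j,k,l} (?R - ?J)"
  proof
    fix T assume T: "T \<in> {T \<in> ?R. l \<in> T}"
    have "T = {j,k,l}" if "j \<in> T" "k \<in> T"
    proof -
      have "finite T" "card T = 3" using T by (auto simp: far_triples_def card_ge_0_finite)
      moreover have "{j,k,l} \<subseteq> T" using that T by auto
      moreover have "card {j,k,l} = 3" using assms(2-4) by simp
      ultimately show ?thesis using card_subset_eq by metis
    qed
    then show "T \<in> insert {j,k,l} (?R - ?J)" using T by blast
  qed
  then have "far_deg U C x a l \<le> card (insert {j,k,l} (?R - ?J))"
    unfolding far_deg_def using fin by (intro card_mono) auto
  also have "\<dots> \<le> card (?R - ?J) + 1" using fin by (simp add: card_insert_if)
  also have "card (?R - ?J) = card ?R - card ?J" using fin by (intro card_Diff_subset) auto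
  finally have "far_deg U C x a l \<le> card ?R - card ?J + 1" .
  moreover have "card ?J \<le> card ?R" using fin by (intro card_mono) auto
  ultimately show ?thesis by linarith
qed

section \<open>The halved 24-cube\<close>

lemma sdiff_pair_in_V24:
  assumes "x \<in> V24" "a \<in> {0..<24}" "b \<in> {0..<24}" "a \<noteq> b"
  shows "x \<oplus> {a,b} \<in> V24"
proof -
  have "x \<subseteq> {0..<24}" "even (card x)" "finite x"
    using assms(1) by (auto simp: V24_def words_def finite_subset)
  moreover have "x \<oplus> {a,b} \<subseteq> {0..<24}" using calculation(1) assms(2,3) by (intro sdiff_subset) auto
  ultimately show ?thesis using assms(4) even_card_sdiff[of x "{a,b}"] by (simp add: V24_def words_def)
qed

definition centre :: "nat set set \<Rightarrow> nat set \<Rightarrow> nat \<Rightarrow> bool" where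
  "centre C v a \<longleftrightarrow> a \<in> {0..<24} \<and> (\<forall>b \<in> {0..<24} - {a}. v \<oplus> {a,b} \<in> C)"

lemma sphere_at_centre:
  assumes vV: "v \<in> V24" and vC: "v \<in> C" and cen: "centre C v a"
  shows "is_sphere (sphere (v \<oplus> {a}))" "v \<in> sphere (v \<oplus> {a})" "sphere (v \<oplus> {a}) \<subseteq> C"
proof -
  let ?z = "v \<oplus> {a}"
  have vU: "v \<subseteq> {0..<24}" "even (card v)" and aU: "a \<in> {0..<24}"
    using vV cen by (auto simp: V24_def words_def centre_def)
  have zU: "?z \<subseteq> {0..<24}" using vU aU by (intro sdiff_subset) auto
  have "odd (card ?z)" using even_card_sdiff[of v "{a}"] vU finite_subset by auto
  then show "is_sphere (sphere ?z)" using zU by (auto simp: is_sphere_def words_def)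
  show "v \<in> sphere ?z" using vU by (simp add: sphere_def words_def hdist_sdiff sdiff_sdiff_left)
  show "sphere ?z \<subseteq> C"
  proof
    fix u assume "u \<in> sphere ?z"
    then have uU: "u \<subseteq> {0..<24}" and "card (?z \<oplus> u) = Suc 0"
      by (auto simp: sphere_def words_def hdist_sdiff sdiff_commute)
    then obtain b where b: "?z \<oplus> u = {b}" by (auto simp: card_1_singleton_iff)
    then have bU: "b \<in> {0..<24}" using zU uU sdiff_subset by blast
    have "u = ?z \<oplus> {b}" using b by (metis sdiff_sdiff_left)
    then have "u = v \<oplus> ({a} \<oplus> {b})" by (simp add: sdiff_assoc)
    moreover have "{a} \<oplus> {b} = (if b = a then {} else {a,b})" unfolding sdiff_def by auto
    ultimately show "u \<in> C" using vC cen bU by (auto simp: centre_def split: if_splits)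
  qed
qed

section \<open>Perfect colorings with parameters ((20 + c, 256 - c), (c, 276 - c))\<close>

locale halved24_coloring =
  fixes C :: "nat set set" and c :: nat
  assumes coloring: "perfect_coloring24 C (20 + c) (256 - c) c (276 - c)"
begin

abbreviation D :: "nat set \<Rightarrow> nat \<Rightarrow> nat" where "D \<equiv> link_deg {0..<24} C"
abbreviation R :: "nat set \<Rightarrow> nat \<Rightarrow> nat set set" where "R \<equiv> far_triples {0..<24} C"
abbreviation Q :: "nat set \<Rightarrow> nat \<Rightarrow> nat \<Rightarrow> nat" where "Q \<equiv> far_deg {0..<24} C"

lemma C_in_V24: "C \<subseteq> V24"
  using coloring unfolding perfect_coloring24_def by blast

lemma C_words: "C \<subseteq> Pow {0..<24}"
  using C_in_V24 by (auto simp: V24_def words_def)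

lemma adj_count_coloring: "w \<in> V24 \<Longrightarrow> adj_count C w = (if w \<in> C then 20 + c else c)"
  using coloring unfolding perfect_coloring24_def adj_count_def by auto

lemma link_identity:
  assumes v: "v \<in> C" and a: "a \<in> {0..<24}" and b: "b \<in> {0..<24}" and ab: "a \<noteq> b"
  shows "D v a + D v b + Q v a b + 1 = c + 22 * of_bool (v \<oplus> {a,b} \<in> C)"
proof -
  have vV: "v \<in> V24" and vU: "v \<subseteq> {0..<24}" using v C_in_V24 C_words by auto
  show ?thesis
    using adj_count_pair[OF finite_atLeastLessThan C_words vU a b ab]
      adj_count_coloring[OF sdiff_pair_in_V24[OF vV a b ab]] v
    by (cases "v \<oplus> {a,b} \<in> C") auto
qed

lemma link_edge:
  "v \<in> C \<Longrightarrow> a \<in> {0..<24} \<Longrightarrow> b \<in> {0..<24} \<Longrightarrow> a \<noteq> b \<Longrightarrow> v \<oplus> {a,b} \<in> C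
    \<Longrightarrow> D v a + D v b + Q v a b = 21 + c"
  using link_identity by fastforce

lemma link_nonedge:
  "v \<in> C \<Longrightarrow> a \<in> {0..<24} \<Longrightarrow> b \<in> {0..<24} \<Longrightarrow> a \<noteq> b \<Longrightarrow> v \<oplus> {a,b} \<notin> C
    \<Longrightarrow> D v a + D v b + Q v a b + 1 = c"
  using link_identity by fastforce

lemma link_deg_sum:
  assumes v: "v \<in> C"
  shows "(\<Sum>a\<in>{0..<24}. D v a) = 40 + 2 * c"
proof -
  have vV: "v \<in> V24" and vU: "v \<subseteq> {0..<24}" using v C_in_V24 C_words by auto
  show ?thesis
    using handshake[OF finite_atLeastLessThan C_words vU] adj_count_coloring[OF vV] v by simp
qed

text \<open>A link degree of at least c forces a centre: a missing neighbour of a would make the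
  non-edge identity fail.\<close>

lemma centre_of_high_degree:
  assumes v: "v \<in> C" and a: "a \<in> {0..<24}" and high: "c \<le> D v a"
  shows "centre C v a"
  unfolding centre_def using a link_nonedge[OF v a] high by fastforce

text \<open>Summing the local identity over all b \<noteq> a determines the number of far triples.\<close>

lemma card_far_triples:
  assumes v: "v \<in> C" and a: "a \<in> {0..<24}"
  shows "3 * card (R v a) + 63 = 21 * c"
proof -
  let ?A = "{0..<24} - {a}"
  have "23 * D v a + (\<Sum>b\<in>?A. D v b) + 3 * card (R v a) + 23
      = (\<Sum>b\<in>?A. D v a + D v b + Q v a b + 1)"
    using a sum_far_deg[of "{0..<24}" C v a] by (simp only: sum.distrib) simp
  also have "\<dots> = (\<Sum>b\<in>?A. c + 22 * of_bool (v \<oplus> {a,b} \<in> C))"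
    using link_identity[OF v a] by (intro sum.cong) auto
  also have "\<dots> = 23 * c + 22 * D v a"
    using a by (simp add: sum.distrib link_deg_as_sum sum_distrib_left[symmetric])
  finally have "23 * D v a + (\<Sum>b\<in>?A. D v b) + 3 * card (R v a) + 23 = 23 * c + 22 * D v a" .
  moreover have "D v a + (\<Sum>b\<in>?A. D v b) = 40 + 2 * c"
    using link_deg_sum[OF v] a by (simp add: sum.remove)
  ultimately show ?thesis by linarith
qed

text \<open>For two link neighbours j, k of a, look at the link of the neighbour v \<oplus> {a,j} at k: it
  contains j and every l with v \<oplus> {a,j,k,l} \<in> C.  Either its degree reaches c, and then k is
  a centre of v \<oplus> {a,j}, or few far triples of a pass through j and k.\<close>

lemma link_pair_dichotomy:
  assumes v: "v \<in> C" and a: "a \<in> {0..<24}" and j: "j \<in> {0..<24}" and k: "k \<in> {0..<24}"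
    and dist: "a \<noteq> j" "a \<noteq> k" "j \<noteq> k" and ej: "v \<oplus> {a,j} \<in> C" and ek: "v \<oplus> {a,k} \<in> C"
  shows "(\<forall>l \<in> {0..<24} - {a,j,k}. v \<oplus> {a,j,k,l} \<in> C)
       \<or> card {T \<in> R v a. j \<in> T \<and> k \<in> T} + 2 \<le> c"
proof -
  let ?w = "v \<oplus> {a,j}"
  let ?L = "{l \<in> {0..<24} - {a,j,k}. v \<oplus> {a,j,k,l} \<in> C}"
  have shift: "?w \<oplus> {k,l} = v \<oplus> {a,j,k,l}" if "l \<notin> {a,j,k}" for l
  proof -
    have "{a,j} \<oplus> {k,l} = {a,j,k,l}" using that dist unfolding sdiff_def by auto
    then show ?thesis by (simp add: sdiff_assoc)
  qed
  have shift_j: "?w \<oplus> {k,j} = v \<oplus> {a,k}"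
  proof -
    have "{a,j} \<oplus> {k,j} = {a,k}" using dist unfolding sdiff_def by auto
    then show ?thesis by (simp add: sdiff_assoc)
  qed
  have "insert j ?L \<subseteq> {b \<in> {0..<24} - {k}. ?w \<oplus> {k,b} \<in> C}"
  proof
    fix b assume "b \<in> insert j ?L"
    then consider "b = j" | "b \<in> ?L" by blast
    then show "b \<in> {b \<in> {0..<24} - {k}. ?w \<oplus> {k,b} \<in> C}"
    proof cases
      case 1 then show ?thesis using shift_j j dist ek by simp
    next
      case 2 then show ?thesis using shift[of b] by simp
    qed
  qed
  then have "card (insert j ?L) \<le> D ?w k" unfolding link_deg_def by (intro card_mono) auto
  then have through: "card ?L + 1 \<le> D ?w k" by simp
  show ?thesis
  proof (cases "c \<le> D ?w k")
    case True
    then have "centre C ?w k" by (rule centre_of_high_degree[OF ej k])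
    have "v \<oplus> {a,j,k,l} \<in> C" if l: "l \<in> {0..<24} - {a,j,k}" for l
    proof -
      have "?w \<oplus> {k,l} \<in> C" using \<open>centre C ?w k\<close> l unfolding centre_def by blast
      then show ?thesis using shift l by simp
    qed
    then show ?thesis by blast
  next
    case False
    then show ?thesis using through card_far_triples_through[OF j k dist] by simp
  qed
qed

lemma link_degree_classes:
  assumes c7: "c \<le> 7" and v: "v \<in> C" and no_centre: "\<forall>a. \<not> centre C v a"
    and a: "a \<in> {0..<24}" and two: "2 \<le> D v a"
  shows "(D v a = 2 \<and> 6 \<le> c) \<or> (D v a = 6 \<and> c = 7)"
proof -
  have low: "D v b + 1 \<le> c" if "b \<in> {0..<24}" for b
    using centre_of_high_degree[OF v that] no_centre by force
  let ?N = "{b \<in> {0..<24} - {a}. v \<oplus> {a,b} \<in> C}"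
  have "\<not> card ?N \<le> Suc 0" using two by (simp add: link_deg_def)
  then obtain j k where jk: "j \<in> ?N" "k \<in> ?N" "j \<noteq> k" by (auto simp: card_le_Suc0_iff_eq)
  then have j: "j \<in> {0..<24}" "a \<noteq> j" "v \<oplus> {a,j} \<in> C"
    and k: "k \<in> {0..<24}" "a \<noteq> k" "v \<oplus> {a,k} \<in> C" by auto
  let ?J = "{T \<in> R v a. j \<in> T \<and> k \<in> T}"
  have far: "3 * card (R v a) + 63 = 21 * c" by (rule card_far_triples[OF v a])
  have qj: "D v a + D v j + Q v a j = 21 + c" by (rule link_edge[OF v a j(1,2,3)])
  have qk: "D v a + D v k + Q v a k = 21 + c" by (rule link_edge[OF v a k(1,2,3)])
  from link_pair_dichotomy[OF v a j(1) k(1) j(2) k(2) jk(3) j(3) k(3)] show ?thesis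
  proof
    assume full: "\<forall>l\<in>{0..<24} - {a,j,k}. v \<oplus> {a,j,k,l} \<in> C"
    then have "{l \<in> {0..<24} - {a,j,k}. v \<oplus> {a,j,k,l} \<in> C} = {0..<24} - {a,j,k}" by blast
    moreover have "card ({0..<24::nat} - {a,j,k}) = card {0..<24::nat} - card {a,j,k}"
      using a j(1) k(1) by (intro card_Diff_subset) auto
    moreover have "card {a,j,k} = 3" using j(2) k(2) jk(3) by simp
    ultimately have J21: "card ?J = 21"
      using card_far_triples_through[OF j(1) k(1) j(2) k(2) jk(3)] by simp
    have "card ?J \<le> card (R v a)" by (intro card_mono finite_far_triples) auto
    then have c6: "6 \<le> c" using J21 far by linarith
    have "D v a \<le> 2"
    proof (rule ccontr)
      assume "\<not> D v a \<le> 2"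
      then have "\<not> ?N \<subseteq> {j,k}" using card_mono[of "{j,k}" ?N] jk(3) by (auto simp: link_deg_def)
      then obtain l where l: "l \<in> ?N" "l \<notin> {j,k}" by blast
      have "D v a + D v l + Q v a l = 21 + c" using l by (intro link_edge[OF v a]) auto
      moreover have "Q v a l + card ?J \<le> card (R v a) + 1"
        using l jk(3) by (intro far_deg_third_le) auto
      moreover have "D v a + 1 \<le> c" "D v l + 1 \<le> c" using low a l by auto
      ultimately show False using J21 far c7 by linarith
    qed
    then show ?thesis using two c6 by simp
  next
    assume few: "card ?J + 2 \<le> c"
    have "Q v a j + Q v a k \<le> card (R v a) + card ?J" by (rule far_deg_two_le) simp
    then have "D v a = 6 \<and> c = 7"
      using few qj qk low[OF a] low[OF j(1)] low[OF k(1)] far c7 two by linarith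
    then show ?thesis ..
  qed
qed

text \<open>Every vertex of C has a centre: otherwise the link degree bounds above make the degree
  sum smaller than the value 40 + 2c given by the handshake lemma.\<close>

lemma centre_exists:
  assumes c7: "c \<le> 7" and v: "v \<in> C"
  shows "\<exists>a. centre C v a"
proof (rule ccontr)
  assume "\<nexists>a. centre C v a"
  then have no_centre: "\<forall>a. \<not> centre C v a" by blast
  have low: "D v b + 1 \<le> c" if "b \<in> {0..<24}" for b
    using centre_of_high_degree[OF v that] no_centre by force
  have "(\<Sum>b\<in>{0..<24}. D v b) < 40 + 2 * c"
  proof (cases "\<exists>a\<in>{0..<24}. D v a = 6 \<and> c = 7")
    case True
    then obtain a where a: "a \<in> {0..<24}" "D v a = 6" "c = 7" by blast
    define N where "N = insert a {b \<in> {0..<24} - {a}. v \<oplus> {a,b} \<in> C}"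
    have "D v b \<le> 6 * of_bool (b \<in> N)" if b: "b \<in> {0..<24}" for b
    proof (cases "b \<in> N")
      case True then show ?thesis using low[OF b] a by simp
    next
      case False then show ?thesis using link_nonedge[OF v a(1) b] a b by (auto simp: N_def)
    qed
    then have "(\<Sum>b\<in>{0..<24}. D v b) \<le> (\<Sum>b\<in>{0..<24}. 6 * of_bool (b \<in> N))" by (rule sum_mono)
    also have "\<dots> = 6 * card N"
    proof -
      have "{0..<24} \<inter> {b. b \<in> N} = N" using a(1) by (auto simp: N_def)
      then show ?thesis by (simp add: sum_distrib_left[symmetric])
    qed
    also have "card N = 7" using a by (simp add: N_def link_deg_def)
    finally show ?thesis using a by simp
  next
    case False
    have "D v b \<le> (if 6 \<le> c then 2 else 1)" if b: "b \<in> {0..<24}" for b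
      using link_degree_classes[OF c7 v no_centre b] False b by (cases "2 \<le> D v b") auto
    then have "(\<Sum>b\<in>{0..<24}. D v b) \<le> 24 * (if 6 \<le> c then 2 else 1)"
      using sum_bounded_above[of "{0..<24::nat}" "D v"] by simp
    then show ?thesis by (simp split: if_splits)
  qed
  then show False using link_deg_sum[OF v] by simp
qed

end

theorem lemma7:
  fixes C :: "nat set set" and c :: nat
  assumes "c \<le> 7"
    and "perfect_coloring24 C (20 + c) (256 - c) c (276 - c)"
  shows "\<exists>F. (\<forall>S \<in> F. is_sphere S) \<and> C = \<Union>F"
proof -
  interpret halved24_coloring C c by (rule halved24_coloring.intro) (rule assms(2))
  let ?F = "{S. is_sphere S \<and> S \<subseteq> C}"
  have "C \<subseteq> \<Union>?F"
  proof
    fix v assume v: "v \<in> C"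
    obtain a where a: "centre C v a" using centre_exists[OF assms(1) v] ..
    have vV: "v \<in> V24" using v C_in_V24 by blast
    have "sphere (v \<oplus> {a}) \<in> ?F" using sphere_at_centre[OF vV v a] by simp
    moreover have "v \<in> sphere (v \<oplus> {a})" by (rule sphere_at_centre(2)[OF vV v a])
    ultimately show "v \<in> \<Union>?F" by blast
  qed
  moreover have "\<Union>?F \<subseteq> C" by blast
  ultimately have "C = \<Union>?F" by (rule equalityI)
  moreover have "\<forall>S \<in> ?F. is_sphere S" by blast
  ultimately show ?thesis by blast
qed

end
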